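(* Let $(X_{1,\infty},f_{1,\infty})$ and $(Y_{1,\infty},g_{1,\infty})$ be equicontinuous topological nonautonomous dynamical systems, and let $\pi_{1,\infty}=\{\pi_n\}$, $\pi_n:X_n\to Y_n$, be an equicontinuous sequence of maps with $\pi_{n+1}\circ f_n=g_n\circ\pi_n$ for all $n\ge1$. Let $\mu_{1,\infty}$ be an $f_{1,\infty}$-invariant sequence of Borel probability measures and $\nu_n:=\pi_n\mu_n$. Then $\nu_{1,\infty}=\{\nu_n\}$ is $g_{1,\infty}$-invariant, and for every $\{\mathcal{Q}_n\}\in\mathcal{E}_{\mathrm{M}}(g_{1,\infty},\nu_{1,\infty})$ the sequence $\{\pi_n^{-1}(\mathcal{Q}_n)\}$ belongs to $\mathcal{E}_{\mathrm{M}}(f_{1,\infty},\mu_{1,\infty})$. Consequently \[ h_{\mathcal{E}_{\mathrm{M}}(g_{1,\infty},\nu_{1,\infty})}(g_{1,\infty})\le h_{\mathcal{E}_{\mathrm{M}}(f_{1,\infty},\mu_{1,\infty})}(f_{1,\infty}). \]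
   Context: Topological NDS: compact metric spaces $X_n$ and continuous maps $f_n:X_n\to X_{n+1}$. A sequence of maps $\{h_n:X_n\to Z_n\}$ between metric spaces is equicontinuous if for every $\varepsilon>0$ there is $\delta>0$ with $d(h_nx,h_ny)<\varepsilon$ whenever $d(x,y)<\delta$, uniformly in $n$. Invariance: $f_n\mu_n=\mu_{n+1}$ (push-forward). $\pi_n^{-1}(\mathcal{Q}_n)=\{\pi_n^{-1}(Q):Q\in\mathcal{Q}_n\}$. Misiurewicz class $\mathcal{E}_{\mathrm{M}}(f_{1,\infty},\mu_{1,\infty})$: sequences $\{\mathcal{P}_n\}$ of finite Borel partitions $\mathcal{P}_n=\{P_{n,1},\dots,P_{n,k_n}\}$ of $X_n$ with $\sup_nk_n<\infty$ such that for every $\varepsilon>0$ there exist $\delta>0$ and compact $C_{n,i}\subset P_{n,i}$ with, for all $n$: (a) $\mu_n(P_{n,i}\setminus C_{n,i})\le\varepsilon$; (b) the distance between points of $C_{n,i}$ and $C_{n,j}$, $i\ne j$, is $\ge\delta$. Entropy: $h(f_{1,\infty};\mathcal{P}_{1,\infty})=\limsup_n\frac1nH_{\mu_1}(\bigvee_{i=0}^{n-1}f_1^{-i}\mathcal{P}_{i+1})$ with $H_\mu(\mathcal{P})=-\sum_P\mu(P)\log\mu(P)$, $f_1^i=f_i\circ\cdots\circ f_1$; $h_{\mathcal{E}}(f_{1,\infty})=\sup_{\mathcal{P}_{1,\infty}\in\mathcal{E}}h(f_{1,\infty};\mathcal{P}_{1,\infty})$ (analogously for $g$ with $\nu_1$).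 *)

theory Defs
  imports "HOL-Probability.Probability"
begin

text \<open>Nonautonomous systems are indexed from 0 (the paper indexes from 1).
  The spaces X n are compact subsets of an ambient metric space type.\<close>

definition equicontinuous_seq :: "(nat \<Rightarrow> 'a::metric_space set) \<Rightarrow> (nat \<Rightarrow> 'a \<Rightarrow> 'b::metric_space) \<Rightarrow> bool" where
  "equicontinuous_seq X h \<longleftrightarrow>
     (\<forall>\<epsilon>>0. \<exists>\<delta>>0. \<forall>n. \<forall>x\<in>X n. \<forall>y\<in>X n. dist x y < \<delta> \<longrightarrow> dist (h n x) (h n y) < \<epsilon>)"

definition topological_NDS :: "(nat \<Rightarrow> 'a::metric_space set) \<Rightarrow> (nat \<Rightarrow> 'a \<Rightarrow> 'a) \<Rightarrow> bool" where
  "topological_NDS X f \<longleftrightarrow>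
     (\<forall>n. compact (X n) \<and> continuous_on (X n) (f n) \<and> f n ` X n \<subseteq> X (Suc n))"

abbreviation borel_on :: "'a::metric_space set \<Rightarrow> 'a measure" where
  "borel_on S \<equiv> restrict_space borel S"

definition invariant_measures :: "(nat \<Rightarrow> 'a::metric_space set) \<Rightarrow> (nat \<Rightarrow> 'a \<Rightarrow> 'a) \<Rightarrow> (nat \<Rightarrow> 'a measure) \<Rightarrow> bool" where
  "invariant_measures X f \<mu> \<longleftrightarrow>
     (\<forall>n. prob_space (\<mu> n) \<and> sets (\<mu> n) = sets (borel_on (X n))
          \<and> distr (\<mu> n) (borel_on (X (Suc n))) (f n) = \<mu> (Suc n))"

text \<open>Finite Borel partition (cells are allowed to be empty).\<close>
definition borel_partition :: "'a::metric_space set \<Rightarrow> 'a set set \<Rightarrow> bool" where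
  "borel_partition S P \<longleftrightarrow> finite P \<and> disjoint P \<and> \<Union>P = S \<and> P \<subseteq> sets (borel_on S)"

definition misiurewicz_class :: "(nat \<Rightarrow> 'a::metric_space set) \<Rightarrow> (nat \<Rightarrow> 'a measure) \<Rightarrow> (nat \<Rightarrow> 'a set set) set" where
  "misiurewicz_class X \<mu> = {P.
     (\<forall>n. borel_partition (X n) (P n)) \<and> (\<exists>K::nat. \<forall>n. card (P n) \<le> K) \<and>
     (\<forall>\<epsilon>>0. \<exists>\<delta>>0. \<exists>C. \<forall>n. \<forall>A\<in>P n.
         compact (C n A) \<and> C n A \<subseteq> A \<and> measure (\<mu> n) (A - C n A) \<le> \<epsilon> \<and>
         (\<forall>B\<in>P n. A \<noteq> B \<longrightarrow> (\<forall>x\<in>C n A. \<forall>y\<in>C n B. \<delta> \<le> dist x y)))}"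

definition preimage_partitions :: "(nat \<Rightarrow> 'a set) \<Rightarrow> (nat \<Rightarrow> 'a \<Rightarrow> 'b) \<Rightarrow> (nat \<Rightarrow> 'b set set) \<Rightarrow> nat \<Rightarrow> 'a set set" where
  "preimage_partitions X \<pi> Q n = (\<lambda>B. X n \<inter> \<pi> n -` B) ` Q n"

definition part_entropy :: "'a measure \<Rightarrow> 'a set set \<Rightarrow> real" where
  "part_entropy M P = - (\<Sum>A\<in>P. measure M A * ln (measure M A))"

primrec fcomp :: "(nat \<Rightarrow> 'a \<Rightarrow> 'a) \<Rightarrow> nat \<Rightarrow> 'a \<Rightarrow> 'a" where
  "fcomp f 0 = id"
| "fcomp f (Suc i) = f i \<circ> fcomp f i"

definition join_partition :: "(nat \<Rightarrow> 'a set) \<Rightarrow> (nat \<Rightarrow> 'a \<Rightarrow> 'a) \<Rightarrow> (nat \<Rightarrow> 'a set set) \<Rightarrow> nat \<Rightarrow> 'a set set" where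
  "join_partition X f P n = {X 0 \<inter> (\<Inter>i<n. fcomp f i -` A i) | A. \<forall>i<n. A i \<in> P i}"

definition seq_entropy :: "(nat \<Rightarrow> 'a set) \<Rightarrow> (nat \<Rightarrow> 'a measure) \<Rightarrow> (nat \<Rightarrow> 'a \<Rightarrow> 'a) \<Rightarrow> (nat \<Rightarrow> 'a set set) \<Rightarrow> ereal" where
  "seq_entropy X \<mu> f P = limsup (\<lambda>n. ereal (part_entropy (\<mu> 0) (join_partition X f P n) / real n))"

definition misiurewicz_entropy :: "(nat \<Rightarrow> 'a::metric_space set) \<Rightarrow> (nat \<Rightarrow> 'a measure) \<Rightarrow> (nat \<Rightarrow> 'a \<Rightarrow> 'a) \<Rightarrow> ereal" where
  "misiurewicz_entropy X \<mu> f = (SUP P\<in>misiurewicz_class X \<mu>. seq_entropy X \<mu> f P)"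

end

theory Submission
  imports Defs
begin

text \<open>The factor map \<pi> transports everything from Y to X. Being continuous, it is Borel
  measurable, so pushing \<mu> forward gives invariant measures, and cells of partitions of Y pull
  back to cells of partitions of X carrying the same measure. Compact cores pull back to compact
  cores (X n is compact), and equicontinuity of \<pi> turns their uniform separation \<delta> into a
  uniform separation \<delta>'. Since \<pi> intertwines f and g, the join of the pulled-back partitions is
  the pull-back of the join, so both systems have the same entropy along corresponding
  sequences.\<close>

lemma space_borel_on [simp]: "space (borel_on S) = S"
  by (simp add: space_restrict_space)

lemma equicontinuous_seq_imp_continuous_on:
  "equicontinuous_seq X h \<Longrightarrow> continuous_on (X n) (h n)"
  unfolding equicontinuous_seq_def continuous_on_iff by (metis dist_commute)

lemma continuous_on_measurable_borel_on:
  "continuous_on S h \<Longrightarrow> h ` S \<subseteq> T \<Longrightarrow> h \<in> borel_on S \<rightarrow>\<^sub>M borel_on T"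
  by (intro measurable_restrict_space2 borel_measurable_continuous_on_restrict) auto

lemma topological_NDS_measurable:
  "topological_NDS X f \<Longrightarrow> f n \<in> borel_on (X n) \<rightarrow>\<^sub>M borel_on (X (Suc n))"
  unfolding topological_NDS_def by (blast intro: continuous_on_measurable_borel_on)

lemma measure_distr_borel_on:
  assumes M: "sets M = sets (borel_on S)" and p: "p \<in> borel_on S \<rightarrow>\<^sub>M borel_on T"
    and B: "B \<in> sets (borel_on T)"
  shows "measure (distr M (borel_on T) p) B = measure M (S \<inter> p -` B)"
proof -
  have "space M = S" using sets_eq_imp_space_eq[OF M] by simp
  moreover have "p \<in> M \<rightarrow>\<^sub>M borel_on T" using p by (subst measurable_cong_sets[OF M refl])
  ultimately show ?thesis using B by (simp add: measure_distr Int_commute)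
qed

lemma invariant_measures_distr:
  assumes \<mu>: "invariant_measures X f \<mu>"
    and f: "\<And>n. f n \<in> borel_on (X n) \<rightarrow>\<^sub>M borel_on (X (Suc n))"
    and g: "\<And>n. g n \<in> borel_on (Y n) \<rightarrow>\<^sub>M borel_on (Y (Suc n))"
    and \<pi>: "\<And>n. \<pi> n \<in> borel_on (X n) \<rightarrow>\<^sub>M borel_on (Y n)"
    and comm: "\<And>n x. x \<in> X n \<Longrightarrow> \<pi> (Suc n) (f n x) = g n (\<pi> n x)"
  shows "invariant_measures Y g (\<lambda>n. distr (\<mu> n) (borel_on (Y n)) (\<pi> n))"
  unfolding invariant_measures_def
proof (intro allI conjI)
  fix n
  have sets_\<mu>: "sets (\<mu> m) = sets (borel_on (X m))" and prob: "prob_space (\<mu> m)"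
    and inv: "distr (\<mu> m) (borel_on (X (Suc m))) (f m) = \<mu> (Suc m)" for m
    using \<mu> unfolding invariant_measures_def by auto
  have \<pi>_\<mu>: "\<pi> m \<in> \<mu> m \<rightarrow>\<^sub>M borel_on (Y m)" and f_\<mu>: "f m \<in> \<mu> m \<rightarrow>\<^sub>M borel_on (X (Suc m))" for m
    using \<pi> f by (subst measurable_cong_sets[OF sets_\<mu> refl]; fast)+
  show "prob_space (distr (\<mu> n) (borel_on (Y n)) (\<pi> n))"
    by (rule prob_space.prob_space_distr[OF prob \<pi>_\<mu>])
  show "sets (distr (\<mu> n) (borel_on (Y n)) (\<pi> n)) = sets (borel_on (Y n))" by simp
  have space_\<mu>: "space (\<mu> n) = X n" using sets_eq_imp_space_eq[OF sets_\<mu>] by simp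
  have "distr (distr (\<mu> n) (borel_on (Y n)) (\<pi> n)) (borel_on (Y (Suc n))) (g n)
      = distr (\<mu> n) (borel_on (Y (Suc n))) (g n \<circ> \<pi> n)"
    by (rule distr_distr[OF g \<pi>_\<mu>])
  also have "\<dots> = distr (\<mu> n) (borel_on (Y (Suc n))) (\<pi> (Suc n) \<circ> f n)"
    by (rule distr_cong) (auto simp: space_\<mu> comm)
  also have "\<dots> = distr (distr (\<mu> n) (borel_on (X (Suc n))) (f n)) (borel_on (Y (Suc n))) (\<pi> (Suc n))"
    by (rule distr_distr[symmetric, OF \<pi> f_\<mu>])
  finally show "distr (distr (\<mu> n) (borel_on (Y n)) (\<pi> n)) (borel_on (Y (Suc n))) (g n)
      = distr (\<mu> (Suc n)) (borel_on (Y (Suc n))) (\<pi> (Suc n))"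
    by (simp only: inv)
qed

lemma borel_partition_vimage:
  assumes Q: "borel_partition T Q" and p: "p \<in> borel_on S \<rightarrow>\<^sub>M borel_on T"
  shows "borel_partition S ((\<lambda>B. S \<inter> p -` B) ` Q)"
  unfolding borel_partition_def
proof (intro conjI)
  have "finite Q" "disjoint Q" "\<Union>Q = T" "Q \<subseteq> sets (borel_on T)"
    using Q unfolding borel_partition_def by auto
  then show "finite ((\<lambda>B. S \<inter> p -` B) ` Q)" by simp
  show "disjoint ((\<lambda>B. S \<inter> p -` B) ` Q)"
  proof (rule disjointI)
    fix A A' assume "A \<in> (\<lambda>B. S \<inter> p -` B) ` Q" "A' \<in> (\<lambda>B. S \<inter> p -` B) ` Q" "A \<noteq> A'"
    then obtain B B' where "B \<in> Q" "B' \<in> Q" "B \<noteq> B'" "A = S \<inter> p -` B" "A' = S \<inter> p -` B'"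
      by auto
    then show "A \<inter> A' = {}" using disjointD[OF \<open>disjoint Q\<close>] by blast
  qed
  have "p ` S \<subseteq> T" using measurable_space[OF p] by auto
  then show "\<Union>((\<lambda>B. S \<inter> p -` B) ` Q) = S" using \<open>\<Union>Q = T\<close> by blast
  have "S \<inter> p -` B \<in> sets (borel_on S)" if "B \<in> sets (borel_on T)" for B
    using measurable_sets[OF p that] by (simp add: Int_commute)
  then show "(\<lambda>B. S \<inter> p -` B) ` Q \<subseteq> sets (borel_on S)" using \<open>Q \<subseteq> sets (borel_on T)\<close> by blast
qed

lemma Int_UN_disjoint_subsets:
  assumes Q: "disjoint Q" and C: "\<And>B. B \<in> Q \<Longrightarrow> C B \<subseteq> B" and B: "B \<in> Q"
  shows "B \<inter> (\<Union>B'\<in>Q. C B') = C B"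
proof
  show "B \<inter> (\<Union>B'\<in>Q. C B') \<subseteq> C B"
  proof
    fix x assume "x \<in> B \<inter> (\<Union>B'\<in>Q. C B')"
    then obtain B' where B': "B' \<in> Q" "x \<in> C B'" "x \<in> B" by blast
    then have "B' = B" using disjointD[OF Q B B'(1)] C[OF B'(1)] by blast
    then show "x \<in> C B" using B' by simp
  qed
  show "C B \<subseteq> B \<inter> (\<Union>B'\<in>Q. C B')" using C[OF B] B by blast
qed

definition separated_compact_cores ::
    "(nat \<Rightarrow> 'a::metric_space measure) \<Rightarrow> (nat \<Rightarrow> 'a set set) \<Rightarrow> real \<Rightarrow> real \<Rightarrow>
      (nat \<Rightarrow> 'a set \<Rightarrow> 'a set) \<Rightarrow> bool"
  where "separated_compact_cores \<mu> P \<epsilon> \<delta> C \<longleftrightarrow>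
    (\<forall>n. \<forall>A\<in>P n. compact (C n A) \<and> C n A \<subseteq> A \<and> measure (\<mu> n) (A - C n A) \<le> \<epsilon> \<and>
       (\<forall>B\<in>P n. A \<noteq> B \<longrightarrow> (\<forall>x\<in>C n A. \<forall>y\<in>C n B. \<delta> \<le> dist x y)))"

lemma misiurewicz_class_iff:
  "P \<in> misiurewicz_class X \<mu> \<longleftrightarrow>
     (\<forall>n. borel_partition (X n) (P n)) \<and> (\<exists>K. \<forall>n. card (P n) \<le> K) \<and>
     (\<forall>\<epsilon>>0. \<exists>\<delta>>0. \<exists>C. separated_compact_cores \<mu> P \<epsilon> \<delta> C)"
  by (simp add: misiurewicz_class_def separated_compact_cores_def)

lemma misiurewicz_class_borel_partition:
  "P \<in> misiurewicz_class X \<mu> \<Longrightarrow> borel_partition (X n) (P n)"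
  by (simp add: misiurewicz_class_iff)

lemma compact_imp_sets_borel_on: "compact K \<Longrightarrow> K \<subseteq> T \<Longrightarrow> K \<in> sets (borel_on T)"
  unfolding sets_restrict_space image_iff
  by (intro bexI[of _ K]) (auto simp: borel_closed compact_imp_closed)

lemma separated_compact_cores_vimage:
  assumes X: "\<And>n. compact (X n)" and \<pi>: "equicontinuous_seq X \<pi>"
    and \<pi>_maps: "\<And>n. \<pi> n ` X n \<subseteq> Y n"
    and sets_\<mu>: "\<And>n. sets (\<mu> n) = sets (borel_on (X n))"
    and Q: "\<And>n. borel_partition (Y n) (Q n)" and "\<delta> > 0"
    and C: "separated_compact_cores (\<lambda>n. distr (\<mu> n) (borel_on (Y n)) (\<pi> n)) Q \<epsilon> \<delta> C"
  shows "\<exists>\<delta>'>0. \<exists>C'. separated_compact_cores \<mu> (preimage_partitions X \<pi> Q) \<epsilon> \<delta>' C'"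
proof -
  have C_compact: "\<And>n B. B \<in> Q n \<Longrightarrow> compact (C n B)"
    and C_sub: "\<And>n B. B \<in> Q n \<Longrightarrow> C n B \<subseteq> B"
    and C_measure: "\<And>n B. B \<in> Q n \<Longrightarrow> measure (distr (\<mu> n) (borel_on (Y n)) (\<pi> n)) (B - C n B) \<le> \<epsilon>"
    and C_sep: "\<And>n B B' x y. B \<in> Q n \<Longrightarrow> B' \<in> Q n \<Longrightarrow> B \<noteq> B' \<Longrightarrow> x \<in> C n B \<Longrightarrow> y \<in> C n B'
        \<Longrightarrow> \<delta> \<le> dist x y"
    using C unfolding separated_compact_cores_def by blast+
  obtain \<delta>' where "\<delta>' > 0"
    and "\<forall>n. \<forall>x\<in>X n. \<forall>y\<in>X n. dist x y < \<delta>' \<longrightarrow> dist (\<pi> n x) (\<pi> n y) < \<delta>"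
    using \<pi> \<open>\<delta> > 0\<close> unfolding equicontinuous_seq_def by blast
  then have \<delta>': "\<And>n x y. x \<in> X n \<Longrightarrow> y \<in> X n \<Longrightarrow> dist x y < \<delta>' \<Longrightarrow> dist (\<pi> n x) (\<pi> n y) < \<delta>"
    by blast
  \<comment> \<open>Intersecting with the pull-back of all cores avoids choosing a B for each cell.\<close>
  define C' where "C' n A = A \<inter> \<pi> n -` (\<Union>B\<in>Q n. C n B)" for n A
  have C'_vimage: "C' n (X n \<inter> \<pi> n -` B) = X n \<inter> \<pi> n -` C n B" if "B \<in> Q n" for n B
  proof -
    have "B \<inter> (\<Union>B'\<in>Q n. C n B') = C n B"
      using Q[of n] C_sub that unfolding borel_partition_def by (intro Int_UN_disjoint_subsets) auto
    then show ?thesis unfolding C'_def by blast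
  qed
  have \<pi>_cont: "continuous_on (X n) (\<pi> n)" for n
    by (rule equicontinuous_seq_imp_continuous_on[OF \<pi>])
  show ?thesis unfolding separated_compact_cores_def preimage_partitions_def
  proof (intro exI[of _ \<delta>'] conjI \<open>\<delta>' > 0\<close> exI[of _ C'] allI ballI impI)
    fix n A assume "A \<in> (\<lambda>B. X n \<inter> \<pi> n -` B) ` Q n"
    then obtain B where B: "B \<in> Q n" and A: "A = X n \<inter> \<pi> n -` B" by blast
    have B_sets: "B \<in> sets (borel_on (Y n))" and "B \<subseteq> Y n"
      using B Q[of n] unfolding borel_partition_def by auto
    show "compact (C' n A)" unfolding A C'_vimage[OF B]
      using C_compact[OF B]
      by (intro closedin_compact[OF X[of n]] continuous_closedin_preimage[OF \<pi>_cont] compact_imp_closed)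
    show "C' n A \<subseteq> A" unfolding C'_def by blast
    have "C n B \<in> sets (borel_on (Y n))"
      using C_compact[OF B] C_sub[OF B] \<open>B \<subseteq> Y n\<close> by (blast intro: compact_imp_sets_borel_on)
    moreover have "A - C' n A = X n \<inter> \<pi> n -` (B - C n B)" unfolding A C'_vimage[OF B] by blast
    ultimately have "measure (\<mu> n) (A - C' n A) = measure (distr (\<mu> n) (borel_on (Y n)) (\<pi> n)) (B - C n B)"
      using B_sets by (simp add: measure_distr_borel_on[OF sets_\<mu> continuous_on_measurable_borel_on[OF \<pi>_cont \<pi>_maps]])
    then show "measure (\<mu> n) (A - C' n A) \<le> \<epsilon>" using C_measure[OF B] by simp
    fix A' x y assume "A' \<in> (\<lambda>B. X n \<inter> \<pi> n -` B) ` Q n" "A \<noteq> A'" and x: "x \<in> C' n A" and y: "y \<in> C' n A'"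
    then obtain B' where B': "B' \<in> Q n" "A' = X n \<inter> \<pi> n -` B'" "B \<noteq> B'" unfolding A by blast
    have x': "x \<in> X n" "\<pi> n x \<in> C n B" and y': "y \<in> X n" "\<pi> n y \<in> C n B'"
      using x y unfolding A B'(2) C'_vimage[OF B] C'_vimage[OF B'(1)] by auto
    show "\<delta>' \<le> dist x y"
    proof (rule ccontr)
      assume "\<not> \<delta>' \<le> dist x y"
      then have "dist (\<pi> n x) (\<pi> n y) < \<delta>" using \<delta>' x'(1) y'(1) by simp
      then show False using C_sep[OF B B'(1,3) x'(2) y'(2)] by simp
    qed
  qed
qed

lemma preimage_partitions_misiurewicz_class:
  assumes X: "\<And>n. compact (X n)" and \<pi>: "equicontinuous_seq X \<pi>"
    and \<pi>_maps: "\<And>n. \<pi> n ` X n \<subseteq> Y n"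
    and sets_\<mu>: "\<And>n. sets (\<mu> n) = sets (borel_on (X n))"
    and Q: "Q \<in> misiurewicz_class Y (\<lambda>n. distr (\<mu> n) (borel_on (Y n)) (\<pi> n))"
  shows "preimage_partitions X \<pi> Q \<in> misiurewicz_class X \<mu>"
proof -
  obtain K where Q_part: "\<And>n. borel_partition (Y n) (Q n)" and Q_card: "\<forall>n. card (Q n) \<le> K"
    and Q_cores: "\<forall>\<epsilon>>0. \<exists>\<delta>>0. \<exists>C. separated_compact_cores (\<lambda>n. distr (\<mu> n) (borel_on (Y n)) (\<pi> n)) Q \<epsilon> \<delta> C"
    using Q unfolding misiurewicz_class_iff by blast
  have \<pi>_meas: "\<pi> n \<in> borel_on (X n) \<rightarrow>\<^sub>M borel_on (Y n)" for n
    by (rule continuous_on_measurable_borel_on[OF equicontinuous_seq_imp_continuous_on[OF \<pi>] \<pi>_maps])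
  have "borel_partition (X n) (preimage_partitions X \<pi> Q n)" for n
    unfolding preimage_partitions_def by (rule borel_partition_vimage[OF Q_part \<pi>_meas])
  moreover have "card (preimage_partitions X \<pi> Q n) \<le> K" for n
    using Q_part[of n] Q_card card_image_le[of "Q n"] unfolding preimage_partitions_def borel_partition_def
    by (meson le_trans)
  moreover have "\<exists>\<delta>'>0. \<exists>C'. separated_compact_cores \<mu> (preimage_partitions X \<pi> Q) \<epsilon> \<delta>' C'"
    if "\<epsilon> > 0" for \<epsilon>
    using Q_cores that separated_compact_cores_vimage[OF X \<pi> \<pi>_maps sets_\<mu> Q_part] by blast
  ultimately show ?thesis unfolding misiurewicz_class_iff by blast
qed

lemma fcomp_mem:
  "(\<And>n. f n ` X n \<subseteq> X (Suc n)) \<Longrightarrow> x \<in> X 0 \<Longrightarrow> fcomp f i x \<in> X i"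
  by (induction i) auto

lemma fcomp_commute:
  assumes "\<And>n. f n ` X n \<subseteq> X (Suc n)"
    and comm: "\<And>n x. x \<in> X n \<Longrightarrow> \<pi> (Suc n) (f n x) = g n (\<pi> n x)" and "x \<in> X 0"
  shows "\<pi> i (fcomp f i x) = fcomp g i (\<pi> 0 x)"
  by (induction i) (simp_all add: comm fcomp_mem[OF assms(1,3)])

lemma measurable_fcomp:
  "(\<And>n. f n \<in> borel_on (X n) \<rightarrow>\<^sub>M borel_on (X (Suc n))) \<Longrightarrow>
    fcomp f i \<in> borel_on (X 0) \<rightarrow>\<^sub>M borel_on (X i)"
  by (induction i) (auto intro: measurable_comp)

lemma finite_join_partition:
  assumes "\<And>i. finite (P i)"
  shows "finite (join_partition X f P n)"
proof -
  define cell where "cell A = X 0 \<inter> (\<Inter>i<n. fcomp f i -` A i)" for A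
  have "join_partition X f P n \<subseteq> cell ` (\<Pi>\<^sub>E i\<in>{..<n}. P i)"
  proof
    fix S assume "S \<in> join_partition X f P n"
    then obtain A where "\<forall>i<n. A i \<in> P i" "S = cell A"
      unfolding join_partition_def cell_def by blast
    moreover have "cell A = cell (restrict A {..<n})" unfolding cell_def by auto
    ultimately show "S \<in> cell ` (\<Pi>\<^sub>E i\<in>{..<n}. P i)" by force
  qed
  then show ?thesis using assms by (meson finite_PiE finite_imageI finite_lessThan finite_subset)
qed

lemma disjoint_join_partition:
  assumes P: "\<And>i. disjoint (P i)"
  shows "disjoint (join_partition X f P n)"
proof (rule disjointI)
  fix S S' assume "S \<in> join_partition X f P n" "S' \<in> join_partition X f P n" "S \<noteq> S'"
  then obtain A A' where A: "\<forall>i<n. A i \<in> P i" "S = X 0 \<inter> (\<Inter>i<n. fcomp f i -` A i)"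
    and A': "\<forall>i<n. A' i \<in> P i" "S' = X 0 \<inter> (\<Inter>i<n. fcomp f i -` A' i)" and "S \<noteq> S'"
    unfolding join_partition_def by blast
  show "S \<inter> S' = {}"
  proof (rule ccontr)
    assume "S \<inter> S' \<noteq> {}"
    then obtain x where x: "x \<in> S" "x \<in> S'" by blast
    have "A i = A' i" if "i < n" for i
    proof -
      have "fcomp f i x \<in> A i \<inter> A' i" using x that unfolding A(2) A'(2) by blast
      then show ?thesis using A(1) A'(1) that disjointD[OF P[of i]] by blast
    qed
    then show False using \<open>S \<noteq> S'\<close> unfolding A(2) A'(2) by auto
  qed
qed

lemma join_partition_sets:
  assumes f: "\<And>n. f n \<in> borel_on (X n) \<rightarrow>\<^sub>M borel_on (X (Suc n))"
    and P: "\<And>i. P i \<subseteq> sets (borel_on (X i))"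
  shows "join_partition X f P n \<subseteq> sets (borel_on (X 0))"
proof
  fix S assume "S \<in> join_partition X f P n"
  then obtain A where A: "\<forall>i<n. A i \<in> P i" and S: "S = X 0 \<inter> (\<Inter>i<n. fcomp f i -` A i)"
    unfolding join_partition_def by blast
  have "{x \<in> space (borel_on (X 0)). i < n \<longrightarrow> fcomp f i x \<in> A i} \<in> sets (borel_on (X 0))" for i
  proof (cases "i < n")
    case True
    then have "fcomp f i -` A i \<inter> space (borel_on (X 0)) \<in> sets (borel_on (X 0))"
      using A P by (intro measurable_sets[OF measurable_fcomp[where X=X, OF f]]) blast
    moreover have "{x \<in> space (borel_on (X 0)). i < n \<longrightarrow> fcomp f i x \<in> A i}
        = fcomp f i -` A i \<inter> space (borel_on (X 0))"
      using True by blast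
    ultimately show ?thesis by simp
  next
    case False
    then have "{x \<in> space (borel_on (X 0)). i < n \<longrightarrow> fcomp f i x \<in> A i} = space (borel_on (X 0))"
      by blast
    then show ?thesis by (simp only: sets.top)
  qed
  then have "{x \<in> space (borel_on (X 0)). \<forall>i. i < n \<longrightarrow> fcomp f i x \<in> A i} \<in> sets (borel_on (X 0))"
    by (rule sets.sets_Collect_countable_All)
  moreover have "S = {x \<in> space (borel_on (X 0)). \<forall>i. i < n \<longrightarrow> fcomp f i x \<in> A i}"
    unfolding S by auto
  ultimately show "S \<in> sets (borel_on (X 0))" by (simp only:)
qed


lemma join_cell_vimage:
  assumes f_maps: "\<And>n. f n ` X n \<subseteq> X (Suc n)" and \<pi>_maps: "\<pi> 0 ` X 0 \<subseteq> Y 0"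
    and comm: "\<And>n x. x \<in> X n \<Longrightarrow> \<pi> (Suc n) (f n x) = g n (\<pi> n x)"
  shows "X 0 \<inter> (\<Inter>i<n. fcomp f i -` (X i \<inter> \<pi> i -` A i))
       = X 0 \<inter> \<pi> 0 -` (Y 0 \<inter> (\<Inter>i<n. fcomp g i -` A i))"
proof (intro set_eqI)
  fix x
  show "x \<in> X 0 \<inter> (\<Inter>i<n. fcomp f i -` (X i \<inter> \<pi> i -` A i))
    \<longleftrightarrow> x \<in> X 0 \<inter> \<pi> 0 -` (Y 0 \<inter> (\<Inter>i<n. fcomp g i -` A i))"
  proof (cases "x \<in> X 0")
    case True
    have "fcomp f i x \<in> X i \<inter> \<pi> i -` A i \<longleftrightarrow> fcomp g i (\<pi> 0 x) \<in> A i" for i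
      using fcomp_mem[where X=X, OF f_maps True, of i]
        fcomp_commute[where X=X and \<pi>=\<pi>, OF f_maps comm True, of i] by simp
    moreover have "\<pi> 0 x \<in> Y 0" using \<pi>_maps True by blast
    ultimately show ?thesis using True by simp
  qed simp
qed

lemma join_partition_preimage_partitions:
  assumes f_maps: "\<And>n. f n ` X n \<subseteq> X (Suc n)" and \<pi>_maps: "\<pi> 0 ` X 0 \<subseteq> Y 0"
    and comm: "\<And>n x. x \<in> X n \<Longrightarrow> \<pi> (Suc n) (f n x) = g n (\<pi> n x)"
  shows "join_partition X f (preimage_partitions X \<pi> Q) n
       = (\<lambda>S. X 0 \<inter> \<pi> 0 -` S) ` join_partition Y g Q n"
proof -
  have cell: "X 0 \<inter> (\<Inter>i<n. fcomp f i -` (X i \<inter> \<pi> i -` A i))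
      = X 0 \<inter> \<pi> 0 -` (Y 0 \<inter> (\<Inter>i<n. fcomp g i -` A i))" for A
    using f_maps \<pi>_maps comm by (rule join_cell_vimage[where X=X and Y=Y and \<pi>=\<pi> and f=f and g=g])
  show ?thesis
  proof (intro equalityI subsetI)
    fix T assume "T \<in> join_partition X f (preimage_partitions X \<pi> Q) n"
    then obtain A' where A': "\<forall>i<n. A' i \<in> preimage_partitions X \<pi> Q i"
      and T: "T = X 0 \<inter> (\<Inter>i<n. fcomp f i -` A' i)"
      unfolding join_partition_def by blast
    have "\<forall>i<n. \<exists>B. B \<in> Q i \<and> A' i = X i \<inter> \<pi> i -` B"
      using A' unfolding preimage_partitions_def by blast
    then obtain A where A: "\<forall>i<n. A i \<in> Q i \<and> A' i = X i \<inter> \<pi> i -` A i"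
      by metis
    then have "T = X 0 \<inter> \<pi> 0 -` (Y 0 \<inter> (\<Inter>i<n. fcomp g i -` A i))"
      unfolding T cell[symmetric] by simp
    moreover have "Y 0 \<inter> (\<Inter>i<n. fcomp g i -` A i) \<in> join_partition Y g Q n"
      unfolding join_partition_def using A by blast
    ultimately show "T \<in> (\<lambda>S. X 0 \<inter> \<pi> 0 -` S) ` join_partition Y g Q n" by blast
  next
    fix T assume "T \<in> (\<lambda>S. X 0 \<inter> \<pi> 0 -` S) ` join_partition Y g Q n"
    then obtain A where A: "\<forall>i<n. A i \<in> Q i"
      and T: "T = X 0 \<inter> \<pi> 0 -` (Y 0 \<inter> (\<Inter>i<n. fcomp g i -` A i))"
      unfolding join_partition_def by blast
    show "T \<in> join_partition X f (preimage_partitions X \<pi> Q) n"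
      unfolding join_partition_def T cell[symmetric]
      using A by (intro CollectI exI[of _ "\<lambda>i. X i \<inter> \<pi> i -` A i"] conjI refl)
        (simp add: preimage_partitions_def)
  qed
qed

lemma part_entropy_distr:
  assumes J: "finite J" "disjoint J" "J \<subseteq> sets N" and p: "p \<in> M \<rightarrow>\<^sub>M N"
  shows "part_entropy (distr M N p) J = part_entropy M ((\<lambda>S. space M \<inter> p -` S) ` J)"
proof -
  define h where "h T = measure M T * ln (measure M T)" for T
  have "(\<Sum>T\<in>(\<lambda>S. space M \<inter> p -` S) ` J. h T) = (\<Sum>S\<in>J. h (space M \<inter> p -` S))"
  proof (rule sum.reindex_nontrivial[OF J(1), unfolded comp_def])
    fix S S' assume "S \<in> J" "S' \<in> J" "S \<noteq> S'" and eq: "space M \<inter> p -` S = space M \<inter> p -` S'"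
    then have "S \<inter> S' = {}" by (intro disjointD[OF J(2)])
    then have "space M \<inter> p -` S = {}" using eq by blast
    then show "h (space M \<inter> p -` S) = 0" unfolding h_def by simp
  qed
  also have "\<dots> = (\<Sum>S\<in>J. measure (distr M N p) S * ln (measure (distr M N p) S))"
  proof (rule sum.cong[OF refl])
    fix S assume "S \<in> J"
    then have "measure (distr M N p) S = measure M (space M \<inter> p -` S)"
      using J(3) p by (subst measure_distr) (auto simp: Int_commute)
    then show "h (space M \<inter> p -` S) = measure (distr M N p) S * ln (measure (distr M N p) S)"
      unfolding h_def by simp
  qed
  finally show ?thesis unfolding part_entropy_def h_def by simp
qed

lemma seq_entropy_preimage_partitions:
  assumes f_maps: "\<And>n. f n ` X n \<subseteq> X (Suc n)"
    and g: "\<And>n. g n \<in> borel_on (Y n) \<rightarrow>\<^sub>M borel_on (Y (Suc n))"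
    and \<pi>: "\<pi> 0 \<in> borel_on (X 0) \<rightarrow>\<^sub>M borel_on (Y 0)"
    and comm: "\<And>n x. x \<in> X n \<Longrightarrow> \<pi> (Suc n) (f n x) = g n (\<pi> n x)"
    and sets_\<mu>: "sets (\<mu> 0) = sets (borel_on (X 0))"
    and Q: "\<And>n. borel_partition (Y n) (Q n)"
  shows "seq_entropy Y (\<lambda>n. distr (\<mu> n) (borel_on (Y n)) (\<pi> n)) g Q
       = seq_entropy X \<mu> f (preimage_partitions X \<pi> Q)"
proof -
  have space_\<mu>: "space (\<mu> 0) = X 0" using sets_eq_imp_space_eq[OF sets_\<mu>] by simp
  have \<pi>_\<mu>: "\<pi> 0 \<in> \<mu> 0 \<rightarrow>\<^sub>M borel_on (Y 0)" using \<pi> by (subst measurable_cong_sets[OF sets_\<mu> refl])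
  have \<pi>_maps: "\<pi> 0 ` X 0 \<subseteq> Y 0" using measurable_space[OF \<pi>] by auto
  have "part_entropy (distr (\<mu> 0) (borel_on (Y 0)) (\<pi> 0)) (join_partition Y g Q n)
      = part_entropy (\<mu> 0) (join_partition X f (preimage_partitions X \<pi> Q) n)" for n
    using Q unfolding borel_partition_def
    by (simp add: part_entropy_distr[OF finite_join_partition disjoint_join_partition
          join_partition_sets[where X=Y, OF g] \<pi>_\<mu>] space_\<mu>
          join_partition_preimage_partitions[where X=X and Y=Y and \<pi>=\<pi> and f=f and g=g, OF f_maps \<pi>_maps comm])
  then show ?thesis unfolding seq_entropy_def by simp
qed

theorem mainTheorem8:
  fixes X :: "nat \<Rightarrow> 'a::metric_space set" and f :: "nat \<Rightarrow> 'a \<Rightarrow> 'a"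
    and Y :: "nat \<Rightarrow> 'b::metric_space set" and g :: "nat \<Rightarrow> 'b \<Rightarrow> 'b"
    and \<pi> :: "nat \<Rightarrow> 'a \<Rightarrow> 'b"
    and \<mu> :: "nat \<Rightarrow> 'a measure" and \<nu> :: "nat \<Rightarrow> 'b measure"
  assumes X: "topological_NDS X f" and Xeq: "equicontinuous_seq X f"
    and Y: "topological_NDS Y g" and Yeq: "equicontinuous_seq Y g"
    and \<pi>_maps: "\<And>n. \<pi> n ` X n \<subseteq> Y n"
    and \<pi>_eq: "equicontinuous_seq X \<pi>"
    and \<pi>_comm: "\<And>n x. x \<in> X n \<Longrightarrow> \<pi> (Suc n) (f n x) = g n (\<pi> n x)"
    and \<mu>: "invariant_measures X f \<mu>"
    and \<nu>_def: "\<And>n. \<nu> n = distr (\<mu> n) (borel_on (Y n)) (\<pi> n)"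
  shows "invariant_measures Y g \<nu>
    \<and> (\<forall>Q\<in>misiurewicz_class Y \<nu>. preimage_partitions X \<pi> Q \<in> misiurewicz_class X \<mu>)
    \<and> misiurewicz_entropy Y \<nu> g \<le> misiurewicz_entropy X \<mu> f"
proof -
  have \<nu>: "\<nu> = (\<lambda>n. distr (\<mu> n) (borel_on (Y n)) (\<pi> n))" using \<nu>_def ..
  have f_maps: "\<And>n. f n ` X n \<subseteq> X (Suc n)" and X_compact: "\<And>n. compact (X n)"
    using X unfolding topological_NDS_def by auto
  have sets_\<mu>: "\<And>n. sets (\<mu> n) = sets (borel_on (X n))"
    using \<mu> unfolding invariant_measures_def by auto
  have \<pi>_meas: "\<And>n. \<pi> n \<in> borel_on (X n) \<rightarrow>\<^sub>M borel_on (Y n)"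
    by (rule continuous_on_measurable_borel_on[OF equicontinuous_seq_imp_continuous_on[OF \<pi>_eq] \<pi>_maps])
  note g_meas = topological_NDS_measurable[OF Y]
  have pullback: "\<forall>Q\<in>misiurewicz_class Y \<nu>. preimage_partitions X \<pi> Q \<in> misiurewicz_class X \<mu>"
    unfolding \<nu> using preimage_partitions_misiurewicz_class[where Y=Y, OF X_compact \<pi>_eq \<pi>_maps sets_\<mu>] ..
  have "seq_entropy Y \<nu> g Q \<le> misiurewicz_entropy X \<mu> f" if Q: "Q \<in> misiurewicz_class Y \<nu>" for Q
  proof -
    have "seq_entropy Y \<nu> g Q = seq_entropy X \<mu> f (preimage_partitions X \<pi> Q)"
      unfolding \<nu> using f_maps g_meas \<pi>_meas \<pi>_comm sets_\<mu> misiurewicz_class_borel_partition[OF Q]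
      by (rule seq_entropy_preimage_partitions)
    also have "\<dots> \<le> misiurewicz_entropy X \<mu> f"
      unfolding misiurewicz_entropy_def using pullback Q by (blast intro: SUP_upper)
    finally show ?thesis .
  qed
  then have "misiurewicz_entropy Y \<nu> g \<le> misiurewicz_entropy X \<mu> f"
    unfolding misiurewicz_entropy_def[of Y] by (rule SUP_least)
  moreover have "invariant_measures Y g \<nu>"
    unfolding \<nu> by (rule invariant_measures_distr[where Y=Y, OF \<mu> topological_NDS_measurable[OF X] g_meas \<pi>_meas \<pi>_comm])
  ultimately show ?thesis using pullback by blast
qed

end
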